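(* Let $q$ be a prime power and $h\geq 2$. Let $\vec u,\vec v,\vec w$ be three $\mathbb{F}_{q^h}$-linearly independent vectors in $\mathbb{F}_{q^h}^3$, and let $f:\mathbb{F}_{q^h}\to\mathbb{F}_q$ be a nonzero $\mathbb{F}_q$-linear functional. Define $U=\{x\vec u+f(x)\vec v+y\vec w : x\in\mathbb{F}_{q^h},\ y\in\mathbb{F}_q\}$. Then $\mathcal{L}_U$ is a blocking set of $\mathrm{PG}(2,q^h)$ of size $q^h+q^{h-1}+1$.
   Context: For an $\mathbb{F}_q$-subspace $U$ of $\mathbb{F}_{q^h}^3$, $\mathcal{L}_U=\{\langle\vec z\rangle_{\mathbb{F}_{q^h}} : \vec z\in U\setminus\{0\}\}$, viewed as a set of points of $\mathrm{PG}(2,q^h)$. A blocking set is a point set meeting every line. *)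

theory Defs
  imports "HOL-Analysis.Finite_Cartesian_Product" "HOL-Computational_Algebra.Primes"
begin

definition is_subfield :: "'a::field set \<Rightarrow> bool" where
  "is_subfield K \<longleftrightarrow> 0 \<in> K \<and> 1 \<in> K \<and>
     (\<forall>x\<in>K. \<forall>y\<in>K. x + y \<in> K \<and> x * y \<in> K) \<and>
     (\<forall>x\<in>K. - x \<in> K) \<and> (\<forall>x\<in>K. x \<noteq> 0 \<longrightarrow> inverse x \<in> K)"

definition is_K_linear_functional :: "'a::field set \<Rightarrow> ('a \<Rightarrow> 'a) \<Rightarrow> bool" where
  "is_K_linear_functional K f \<longleftrightarrow> (\<forall>x. f x \<in> K) \<and>
     (\<forall>x y. f (x + y) = f x + f y) \<and> (\<forall>c\<in>K. \<forall>x. f (c * x) = c * f x)"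

definition lin_indep3 :: "'a::field ^ 3 \<Rightarrow> 'a ^ 3 \<Rightarrow> 'a ^ 3 \<Rightarrow> bool" where
  "lin_indep3 u v w \<longleftrightarrow>
     (\<forall>a b c. a *s u + b *s v + c *s w = 0 \<longrightarrow> a = 0 \<and> b = 0 \<and> c = 0)"

definition pt :: "'a::field ^ 3 \<Rightarrow> ('a ^ 3) set" where
  "pt z = {c *s z | c. True}"

definition PG2_points :: "('a::field ^ 3) set set" where
  "PG2_points = {pt z | z. z \<noteq> 0}"

definition proj_line :: "'a::field ^ 3 \<Rightarrow> ('a ^ 3) set set" where
  "proj_line a = {pt z | z. z \<noteq> 0 \<and> (\<Sum>i\<in>UNIV. a $ i * z $ i) = 0}"

definition PG2_lines :: "('a::field ^ 3) set set set" where
  "PG2_lines = {proj_line a | a. a \<noteq> 0}"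

definition blocking_set :: "('a::field ^ 3) set set \<Rightarrow> bool" where
  "blocking_set B \<longleftrightarrow> B \<subseteq> PG2_points \<and> (\<forall>l\<in>PG2_lines. B \<inter> l \<noteq> {})"

definition LU :: "('a::field ^ 3) set \<Rightarrow> ('a ^ 3) set set" where
  "LU U = {pt z | z. z \<in> U \<and> z \<noteq> 0}"

end

theory Submission
  imports Defs
begin

text \<open>
  Write vectors in the basis u, v, w and let \<open>U = {x u + f(x) v + y w}\<close>, an
  \<open>\<bbbF>\<^sub>q\<close>-subspace with \<open>q\<^sup>h\<^sup>+\<^sup>1\<close> elements. A line with coordinates a is blocked because
  the map \<open>z \<mapsto> a \<cdot> z\<close> cannot be injective on U, so the difference of two
  vectors of U with the same value is a nonzero vector of U on the line.
  For the size, the points of \<open>L\<^sub>U\<close> are \<open>\<langle>x u + f(x) v + w\<rangle>\<close> (y \<noteq> 0, \<open>q\<^sup>h\<close> points),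
  \<open>\<langle>x u + v\<rangle>\<close> with f(x) = 1 (y = 0, f(x) \<noteq> 0, \<open>q\<^sup>h\<^sup>-\<^sup>1\<close> points) and \<open>\<langle>u\<rangle>\<close>, which lies in
  \<open>L\<^sub>U\<close> because f has a nonzero kernel vector when h \<ge> 2.
\<close>

definition lincomb3 :: "'a::field ^ 3 \<Rightarrow> 'a ^ 3 \<Rightarrow> 'a ^ 3 \<Rightarrow> 'a \<Rightarrow> 'a \<Rightarrow> 'a \<Rightarrow> 'a ^ 3" where
  "lincomb3 u v w a b c = a *s u + b *s v + c *s w"

lemma lincomb3_diff:
  "lincomb3 u v w a b c - lincomb3 u v w a' b' c' = lincomb3 u v w (a - a') (b - b') (c - c')"
  by (simp add: lincomb3_def vec_eq_iff algebra_simps)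

lemma smult_lincomb3: "d *s lincomb3 u v w a b c = lincomb3 u v w (d * a) (d * b) (d * c)"
  by (simp add: lincomb3_def vec_eq_iff algebra_simps)

lemma lincomb3_eq_0_iff:
  assumes "lin_indep3 u v w"
  shows "lincomb3 u v w a b c = 0 \<longleftrightarrow> a = 0 \<and> b = 0 \<and> c = 0"
  using assms by (auto simp: lin_indep3_def lincomb3_def)

lemma lincomb3_eq_iff:
  assumes "lin_indep3 u v w"
  shows "lincomb3 u v w a b c = lincomb3 u v w a' b' c' \<longleftrightarrow> a = a' \<and> b = b' \<and> c = c'"
  using lincomb3_eq_0_iff[OF assms, of "a - a'" "b - b'" "c - c'"]
  by (auto simp flip: lincomb3_diff)

lemma pt_eqD: "pt z = pt z' \<Longrightarrow> \<exists>c. z' = c *s z"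
proof -
  assume "pt z = pt z'"
  moreover have "z' \<in> pt z'" unfolding pt_def by (auto intro: exI[of _ 1])
  ultimately show ?thesis unfolding pt_def by auto
qed

lemma pt_smult:
  assumes "(c::'a::field) \<noteq> 0"
  shows "pt (c *s z) = pt z"
proof -
  have "d *s z = (d / c) *s (c *s z)" for d using assms by (simp add: vector_smult_assoc)
  then show ?thesis unfolding pt_def by (metis vector_smult_assoc)
qed

lemma pt_lincomb3_eqD:
  assumes "lin_indep3 u v w" and "pt (lincomb3 u v w a b c) = pt (lincomb3 u v w a' b' c')"
  shows "\<exists>d. a' = d * a \<and> b' = d * b \<and> c' = d * c"
  using pt_eqD[OF assms(2)] by (auto simp: smult_lincomb3 lincomb3_eq_iff[OF assms(1)])

lemma pt_lincomb3_smult: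
  "d \<noteq> 0 \<Longrightarrow> pt (lincomb3 u v w (d * a) (d * b) (d * c)) = pt (lincomb3 u v w a b c)"
  by (simp add: pt_smult flip: smult_lincomb3)

lemma subfield_diff:
  assumes "is_subfield K" and "x \<in> K" and "y \<in> K"
  shows "x - y \<in> K"
proof -
  have "x + - y \<in> K" using assms unfolding is_subfield_def by blast
  then show ?thesis by simp
qed

lemma subfield_inverse: "is_subfield K \<Longrightarrow> x \<in> K \<Longrightarrow> inverse x \<in> K"
  unfolding is_subfield_def by (cases "x = 0") auto

lemma card_subfield_ge_2:
  assumes "finite K" and "is_subfield K"
  shows "2 \<le> card K"
proof -
  have "{0, 1} \<subseteq> K" using assms(2) by (simp add: is_subfield_def)
  then have "card {0 :: 'a, 1} \<le> card K" by (rule card_mono[OF assms(1)])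
  then show ?thesis by simp
qed

lemma K_linear_functional_diff:
  assumes "is_subfield K" and "is_K_linear_functional K f"
  shows "f (x - y) = f x - f y"
proof -
  have "- 1 \<in> K" using assms(1) by (simp add: is_subfield_def)
  then have "f (- 1 * y) = - 1 * f y"
    using assms(2) unfolding is_K_linear_functional_def by blast
  moreover have "f (x + - y) = f x + f (- y)"
    using assms(2) unfolding is_K_linear_functional_def by blast
  ultimately show ?thesis by simp
qed

text \<open>Each fibre of f is a coset of the kernel: \<open>x \<mapsto> (f x, x + (c - f x) x\<^sub>0)\<close> with
  \<open>f x\<^sub>0 = 1\<close> identifies the whole field with \<open>K \<times> f\<^sup>-\<^sup>1(c)\<close>.\<close>
lemma card_fibre_K_linear_functional:
  fixes f :: "'a::{finite,field} \<Rightarrow> 'a"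
  assumes K: "is_subfield K" and f: "is_K_linear_functional K f"
    and "f x1 \<noteq> 0" and "c \<in> K"
  shows "card K * card {x. f x = c} = CARD('a)"
proof -
  have fK: "f x \<in> K" for x using f by (simp add: is_K_linear_functional_def)
  have fmult: "d \<in> K \<Longrightarrow> f (d * x) = d * f x" for d x
    using f by (simp add: is_K_linear_functional_def)
  define x0 where "x0 = inverse (f x1) * x1"
  have fx0: "f x0 = 1"
    using fmult[OF subfield_inverse[OF K fK]] \<open>f x1 \<noteq> 0\<close> by (simp add: x0_def)
  have f_shift: "f (x + d * x0) = f x + d" if "d \<in> K" for x d
    using f fmult[OF that] fx0 by (simp add: is_K_linear_functional_def)
  have "bij_betw (\<lambda>x. (f x, x + (c - f x) * x0)) UNIV (K \<times> {x. f x = c})"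
  proof (rule bij_betw_byWitness[where f' = "\<lambda>(d, y). y + (d - c) * x0"])
    show "(\<lambda>x. (f x, x + (c - f x) * x0)) ` UNIV \<subseteq> K \<times> {x. f x = c}"
      using fK f_shift subfield_diff[OF K \<open>c \<in> K\<close>] by auto
    show "\<forall>x\<in>UNIV. (\<lambda>(d, y). y + (d - c) * x0) (f x, x + (c - f x) * x0) = x"
      by (simp add: algebra_simps)
    show "\<forall>b\<in>K \<times> {x. f x = c}.
        (\<lambda>x. (f x, x + (c - f x) * x0)) ((\<lambda>(d, y). y + (d - c) * x0) b) = b"
    proof
      fix b assume "b \<in> K \<times> {x. f x = c}"
      then obtain d y where b: "b = (d, y)" "d \<in> K" "f y = c" by blast
      then have "f (y + (d - c) * x0) = d"
        using f_shift[OF subfield_diff[OF K \<open>d \<in> K\<close> \<open>c \<in> K\<close>]] by simp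
      then show "(\<lambda>x. (f x, x + (c - f x) * x0)) ((\<lambda>(d, y). y + (d - c) * x0) b) = b"
        unfolding b by (simp add: algebra_simps)
    qed
  qed simp
  then have "CARD('a) = card (K \<times> {x. f x = c})" by (rule bij_betw_same_card)
  then show ?thesis by (simp add: card_cartesian_product)
qed

lemma K_linear_functional_kernel_nontrivial:
  fixes f :: "'a::{finite,field} \<Rightarrow> 'a"
  assumes "is_subfield K" and "is_K_linear_functional K f"
    and "f x1 \<noteq> 0" and "card K < CARD('a)"
  shows "\<exists>k. k \<noteq> 0 \<and> f k = 0"
proof (rule ccontr)
  assume "\<not> ?thesis"
  then have "{x. f x = 0} \<subseteq> {0}" by blast
  then have "card {x. f x = 0} \<le> card {0 :: 'a}" by (rule card_mono[rotated]) simp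
  then have "card K * card {x. f x = 0} \<le> card K" by simp
  moreover have "0 \<in> K" using assms(1) by (simp add: is_subfield_def)
  ultimately show False
    using card_fibre_K_linear_functional[OF assms(1-3)] assms(4) by simp
qed

lemma blocking_set_LU_if_card_gt:
  fixes U :: "('a::{finite,field} ^ 3) set"
  assumes diff_closed: "\<And>x y. x \<in> U \<Longrightarrow> y \<in> U \<Longrightarrow> x - y \<in> U"
    and "CARD('a) < card U"
  shows "blocking_set (LU U)"
  unfolding blocking_set_def
proof (intro conjI ballI)
  show "LU U \<subseteq> PG2_points" unfolding LU_def PG2_points_def by blast
next
  fix l :: "('a ^ 3) set set" assume "l \<in> PG2_lines"
  then obtain a :: "'a ^ 3" where l: "l = proj_line a" unfolding PG2_lines_def by blast
  define form where "form z = (\<Sum>i\<in>UNIV. a $ i * z $ i)" for z :: "'a ^ 3"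
  have "\<not> inj_on form U"
    using card_inj_on_le[of form U UNIV] assms(2) by auto
  then obtain z1 z2 where "z1 \<in> U" "z2 \<in> U" "z1 \<noteq> z2" "form z1 = form z2"
    unfolding inj_on_def by blast
  then have "z1 - z2 \<in> U" "z1 - z2 \<noteq> 0" "form (z1 - z2) = 0"
    using diff_closed by (auto simp: form_def algebra_simps sum_subtractf)
  then have "pt (z1 - z2) \<in> LU U \<inter> l"
    unfolding LU_def l proj_line_def form_def by blast
  then show "LU U \<inter> l \<noteq> {}" by blast
qed

lemma pt_in_LU: "z \<in> U \<Longrightarrow> z \<noteq> 0 \<Longrightarrow> pt z \<in> LU U"
  unfolding LU_def by blast

definition graph_subspace ::
    "'a::field set \<Rightarrow> ('a \<Rightarrow> 'a) \<Rightarrow> 'a ^ 3 \<Rightarrow> 'a ^ 3 \<Rightarrow> 'a ^ 3 \<Rightarrow> ('a ^ 3) set" where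
  "graph_subspace K f u v w = {lincomb3 u v w x (f x) y | x y. y \<in> K}"

lemma graph_subspace_diff:
  assumes "is_subfield K" and "is_K_linear_functional K f"
    and "z \<in> graph_subspace K f u v w" and "z' \<in> graph_subspace K f u v w"
  shows "z - z' \<in> graph_subspace K f u v w"
proof -
  obtain x y x' y' where "y \<in> K" "y' \<in> K"
    and "z = lincomb3 u v w x (f x) y" "z' = lincomb3 u v w x' (f x') y'"
    using assms(3,4) unfolding graph_subspace_def by blast
  then have "z - z' = lincomb3 u v w (x - x') (f (x - x')) (y - y')" "y - y' \<in> K"
    by (simp_all add: lincomb3_diff K_linear_functional_diff[OF assms(1,2)] subfield_diff[OF assms(1)])
  then show ?thesis unfolding graph_subspace_def by blast
qed

lemma card_graph_subspace:
  fixes f :: "'a::{finite,field} \<Rightarrow> 'a"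
  assumes "lin_indep3 u v w"
  shows "card (graph_subspace K f u v w) = CARD('a) * card K"
proof -
  have "graph_subspace K f u v w = (\<lambda>(x, y). lincomb3 u v w x (f x) y) ` (UNIV \<times> K)"
    unfolding graph_subspace_def by auto
  moreover have "inj_on (\<lambda>(x, y). lincomb3 u v w x (f x) y) (UNIV \<times> K)"
    by (auto intro!: inj_onI simp: lincomb3_eq_iff[OF assms])
  ultimately show ?thesis by (simp add: card_image card_cartesian_product)
qed

lemma LU_graph_subspace_eq:
  assumes indep: "lin_indep3 u v w" and K: "is_subfield K"
    and f: "is_K_linear_functional K f" and "k \<noteq> 0" "f k = 0"
  shows "LU (graph_subspace K f u v w) =
    insert (pt (lincomb3 u v w 1 0 0))
      ((\<lambda>x. pt (lincomb3 u v w x (f x) 1)) ` UNIV \<union> (\<lambda>x. pt (lincomb3 u v w x 1 0)) ` {x. f x = 1})"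
    (is "_ = insert ?P0 (?S1 \<union> ?S2)")
proof (intro set_eqI iffI)
  have fK: "f x \<in> K" for x using f by (simp add: is_K_linear_functional_def)
  have fmult_inverse: "d \<in> K \<Longrightarrow> f (inverse d * x) = inverse d * f x" for d x
    using f subfield_inverse[OF K] by (simp add: is_K_linear_functional_def)
  fix P assume "P \<in> LU (graph_subspace K f u v w)"
  then obtain x y where "y \<in> K" and P: "P = pt (lincomb3 u v w x (f x) y)"
    and nz: "lincomb3 u v w x (f x) y \<noteq> 0"
    unfolding LU_def graph_subspace_def by blast
  consider "y \<noteq> 0" | "y = 0" "f x \<noteq> 0" | "y = 0" "f x = 0" "x \<noteq> 0"
    using nz by (auto simp: lincomb3_eq_0_iff[OF indep])
  then show "P \<in> insert ?P0 (?S1 \<union> ?S2)"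
  proof cases
    case 1
    then have "P = pt (lincomb3 u v w (inverse y * x) (f (inverse y * x)) 1)"
      using pt_lincomb3_smult[of y u v w "inverse y * x" "inverse y * f x" 1] \<open>y \<in> K\<close>
      by (simp add: P fmult_inverse mult.assoc[symmetric])
    then show ?thesis by blast
  next
    case 2
    then have "P = pt (lincomb3 u v w (inverse (f x) * x) 1 0)"
      using pt_lincomb3_smult[of "f x" u v w "inverse (f x) * x" 1 0]
      by (simp add: P mult.assoc[symmetric])
    moreover have "f (inverse (f x) * x) = 1" using 2 by (simp add: fK fmult_inverse)
    ultimately show ?thesis by blast
  next
    case 3
    then show ?thesis using pt_lincomb3_smult[of x u v w 1 0 0] by (simp add: P)
  qed
next
  have "0 \<in> K" "1 \<in> K" using K by (auto simp: is_subfield_def)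
  have mem: "pt (lincomb3 u v w x (f x) y) \<in> LU (graph_subspace K f u v w)"
    if "y \<in> K" "x \<noteq> 0 \<or> f x \<noteq> 0 \<or> y \<noteq> 0" for x y
    using that by (intro pt_in_LU) (auto simp: graph_subspace_def lincomb3_eq_0_iff[OF indep])
  have "?P0 = pt (lincomb3 u v w k (f k) 0)"
    using pt_lincomb3_smult[of k u v w 1 0 0] \<open>k \<noteq> 0\<close> \<open>f k = 0\<close> by simp
  then have "?P0 \<in> LU (graph_subspace K f u v w)"
    using mem[of 0 k] \<open>0 \<in> K\<close> \<open>k \<noteq> 0\<close> by simp
  moreover have "?S1 \<subseteq> LU (graph_subspace K f u v w)"
    using mem[of 1] \<open>1 \<in> K\<close> by auto
  moreover have "pt (lincomb3 u v w x 1 0) \<in> LU (graph_subspace K f u v w)" if "f x = 1" for x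
    using mem[of 0 x] that \<open>0 \<in> K\<close> by simp
  then have "?S2 \<subseteq> LU (graph_subspace K f u v w)" by auto
  ultimately show "P \<in> LU (graph_subspace K f u v w)" if "P \<in> insert ?P0 (?S1 \<union> ?S2)" for P
    using that by blast
qed

lemma card_LU_graph_subspace:
  fixes f :: "'a::{finite,field} \<Rightarrow> 'a"
  assumes indep: "lin_indep3 u v w" and "is_subfield K"
    and "is_K_linear_functional K f" and "k \<noteq> 0" "f k = 0"
  shows "card (LU (graph_subspace K f u v w)) = CARD('a) + card {x. f x = 1} + 1"
proof -
  let ?pt = "\<lambda>a b c. pt (lincomb3 u v w a b c)"
  have pt_eq: "?pt a b c = ?pt a' b' c' \<Longrightarrow> \<exists>d. a' = d * a \<and> b' = d * b \<and> c' = d * c"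
    for a b c a' b' c'
    by (rule pt_lincomb3_eqD[OF indep])
  have "inj (\<lambda>x. ?pt x (f x) 1)" "inj (\<lambda>x. ?pt x 1 0)"
    by (auto intro!: injI dest!: pt_eq)
  moreover have "(\<lambda>x. ?pt x (f x) 1) ` UNIV \<inter> (\<lambda>x. ?pt x 1 0) ` {x. f x = 1} = {}"
    by (force dest: pt_eq)
  moreover have "?pt 1 0 0 \<notin> (\<lambda>x. ?pt x (f x) 1) ` UNIV \<union> (\<lambda>x. ?pt x 1 0) ` {x. f x = 1}"
    by (force dest: pt_eq)
  ultimately show ?thesis
    unfolding LU_graph_subspace_eq[OF assms]
    by (simp add: card_Un_disjoint card_image inj_on_subset)
qed

theorem lemma3p2:
  fixes K :: "'a::{finite,field} set" and q h :: nat
    and u v w :: "'a ^ 3" and f :: "'a \<Rightarrow> 'a"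
  assumes "\<exists>p k. prime p \<and> k > 0 \<and> q = p ^ k"
    and "h \<ge> 2"
    and "CARD('a) = q ^ h"
    and "is_subfield K" and "card K = q"
    and "lin_indep3 u v w"
    and "is_K_linear_functional K f" and "\<exists>x. f x \<noteq> 0"
  shows "blocking_set (LU {x *s u + f x *s v + y *s w | x y. y \<in> K})
       \<and> card (LU {x *s u + f x *s v + y *s w | x y. y \<in> K}) = q ^ h + q ^ (h - 1) + 1"
proof -
  let ?U = "graph_subspace K f u v w"
  have U: "{x *s u + f x *s v + y *s w | x y. y \<in> K} = ?U"
    by (simp add: graph_subspace_def lincomb3_def)
  obtain x1 where "f x1 \<noteq> 0" using assms(8) by blast
  have "q \<ge> 2" using card_subfield_ge_2[OF finite assms(4)] assms(5) by simp
  moreover have q_power: "q ^ h = q * q ^ (h - 1)" using \<open>h \<ge> 2\<close>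
    by (simp flip: power_Suc)
  ultimately have "q < q ^ h"
    using \<open>h \<ge> 2\<close> one_less_power[of q "h - 1"] by simp
  have "card ?U = q ^ h * q"
    using card_graph_subspace[OF assms(6)] assms(3,5) by simp
  then have "blocking_set (LU ?U)"
    using \<open>q < q ^ h\<close> \<open>q \<ge> 2\<close> graph_subspace_diff[OF assms(4,7)]
    by (intro blocking_set_LU_if_card_gt) (auto simp: assms(3))
  moreover obtain k where "k \<noteq> 0" "f k = 0"
    using K_linear_functional_kernel_nontrivial[OF assms(4,7) \<open>f x1 \<noteq> 0\<close>]
      \<open>q < q ^ h\<close> assms(3,5) by auto
  moreover have "q * card {x. f x = 1} = q * q ^ (h - 1)"
    using card_fibre_K_linear_functional[OF assms(4,7) \<open>f x1 \<noteq> 0\<close>, of 1] assms(3-5) q_power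
    by (simp add: is_subfield_def)
  ultimately show ?thesis
    using card_LU_graph_subspace[OF assms(6,4,7)] \<open>q \<ge> 2\<close> assms(3) unfolding U by simp
qed

end
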